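(* Let $m_1,m_2\in\mathbb{N}$, $a>0$, and suppose $V\in\big[L^2((0,\infty))\big]^{m\times m}$ with $\operatorname{supp}(V)\subseteq[0,a]$. Then for $z\in\mathbb{C}_+$, \[ \varphi(z)=i\int_0^a e^{2ixz}v(x)^*\,dx+i\big((L-zI)^{-1}f_1,f_2\big), \] where $f_1(x,z)=V(x)e^{ixzJ}\begin{bmatrix}I_{m_1}\\0\end{bmatrix}$ and $f_2(x)=V(x)e^{ix\overline{z}J}\begin{bmatrix}0\\ I_{m_2}\end{bmatrix}$, and for matrix-valued functions $(Y_1,Y_2)=\int_0^\infty Y_2(x)^*Y_1(x)\,dx$ (with $(L-zI)^{-1}$ applied columnwise).
   Context: $m=m_1+m_2$, $J=\begin{bmatrix}I_{m_1}&0\\0&-I_{m_2}\end{bmatrix}$, $V=\begin{bmatrix}0_{m_1}&v\\ v^*&0_{m_2}\end{bmatrix}$ with $v$ an $m_1\times m_2$ matrix function; Dirac-type system $y'(x,z)=i(zJ+JV(x))y(x,z)$, $x\ge0$. $u(x,z)$ is the fundamental solution with $u(0,z)=I_m$; $\varphi(z)$ is the Weyl–Titchmarsh function, the unique $m_2\times m_1$ matrix function holomorphic in $\mathbb{C}_+$ with $u(\cdot,z)\begin{bmatrix}I_{m_1}\\ \varphi(z)\end{bmatrix}$ having entries in $L^2((0,\infty))$. $L$ is the operator in $\big[L^2((0,\infty))\big]^m$ generated by $\mathcal{L}=-iJ\frac{d}{dx}-V(x)$ with boundary condition $\begin{bmatrix}I_{m_1}&0\end{bmatrix}Y(0)=0$.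 *)

theory Defs
  imports "HOL-Analysis.Analysis"
begin

text \<open>Matrices are Cartesian-product types: an r x c complex matrix is complex^'c^'r.
  The index set of size m1 is the finite type 'a, that of size m2 is 'b,
  and m = m1 + m2 is the sum type 'a + 'b (Inl = first block, Inr = second block).\<close>

definition cscale :: "complex \<Rightarrow> complex^'n::finite^'m::finite \<Rightarrow> complex^'n::finite^'m::finite" where
  "cscale c A = (\<chi> i j. c * A $ i $ j)"

definition cadj :: "complex^'n::finite^'m::finite \<Rightarrow> complex^'m^'n" where
  "cadj A = (\<chi> i j. cnj (A $ j $ i))"

definition Jmat :: "complex^('a::finite+'b::finite)^('a::finite+'b::finite)" where
  "Jmat = (\<chi> k l. if k = l then (case k of Inl _ \<Rightarrow> 1 | Inr _ \<Rightarrow> -1) else 0)"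

definition Vmat :: "(real \<Rightarrow> complex^'b::finite^'a::finite) \<Rightarrow> real \<Rightarrow> complex^('a::finite+'b::finite)^('a::finite+'b::finite)" where
  "Vmat v x = (\<chi> k l. case (k, l) of
       (Inl i, Inr j) \<Rightarrow> v x $ i $ j
     | (Inr i, Inl j) \<Rightarrow> cnj (v x $ j $ i)
     | _ \<Rightarrow> 0)"

text \<open>The matrix exponential e^{wJ}; since J is diagonal this is diag(e^w I_m1, e^{-w} I_m2).\<close>
definition expJ :: "complex \<Rightarrow> complex^('a::finite+'b::finite)^('a::finite+'b::finite)" where
  "expJ w = (\<chi> k l. if k = l then exp ((case k of Inl _ \<Rightarrow> 1 | Inr _ \<Rightarrow> -1) * w) else 0)"

definition E1 :: "complex^'a^('a::finite+'b::finite)" where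
  "E1 = (\<chi> k j. case k of Inl i \<Rightarrow> (if i = j then 1 else 0) | Inr _ \<Rightarrow> 0)"

definition E2 :: "complex^'b^('a::finite+'b::finite)" where
  "E2 = (\<chi> k j. case k of Inl _ \<Rightarrow> 0 | Inr i \<Rightarrow> (if i = j then 1 else 0))"

definition Icol :: "complex^'a::finite^'b::finite \<Rightarrow> complex^'a^('a::finite+'b::finite)" where
  "Icol p = (\<chi> k j. case k of Inl i \<Rightarrow> (if i = j then 1 else 0) | Inr i \<Rightarrow> p $ i $ j)"

definition L2_on :: "real set \<Rightarrow> (real \<Rightarrow> complex) \<Rightarrow> bool" where
  "L2_on S f \<longleftrightarrow> f \<in> borel_measurable (lebesgue_on S)
      \<and> integrable (lebesgue_on S) (\<lambda>x. (cmod (f x))\<^sup>2)"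

definition L2_vec :: "real set \<Rightarrow> (real \<Rightarrow> complex^'m::finite) \<Rightarrow> bool" where
  "L2_vec S f \<longleftrightarrow> (\<forall>i. L2_on S (\<lambda>x. f x $ i))"

definition L2_mat :: "real set \<Rightarrow> (real \<Rightarrow> complex^'n::finite^'m::finite) \<Rightarrow> bool" where
  "L2_mat S F \<longleftrightarrow> (\<forall>i j. L2_on S (\<lambda>x. F x $ i $ j))"

text \<open>u is the fundamental solution of y' = i(zJ + JV(x))y, u(0,z) = I_m, on [0,\<infinity>),
  in the integral-equation sense (V is only locally integrable).\<close>
definition fundamental_solution ::
  "(real \<Rightarrow> complex^'b::finite^'a::finite) \<Rightarrow> (real \<Rightarrow> complex \<Rightarrow> complex^('a::finite+'b::finite)^('a::finite+'b::finite)) \<Rightarrow> bool" where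
  "fundamental_solution v u \<longleftrightarrow>
     (\<forall>z. \<forall>x\<ge>0. ((\<lambda>t. cscale \<i> ((cscale z Jmat + Jmat ** Vmat v t) ** u t z))
                    has_integral (u x z - mat 1)) {0..x})"

definition weyl_function ::
  "(real \<Rightarrow> complex \<Rightarrow> complex^('a::finite+'b::finite)^('a::finite+'b::finite)) \<Rightarrow> (complex \<Rightarrow> complex^'a::finite^'b::finite) \<Rightarrow> bool" where
  "weyl_function u \<phi> \<longleftrightarrow>
     (\<forall>i j. (\<lambda>z. \<phi> z $ i $ j) holomorphic_on {z. 0 < Im z})
     \<and> (\<forall>z. 0 < Im z \<longrightarrow> L2_mat {0..} (\<lambda>x. u x z ** Icol (\<phi> z)))"

text \<open>y = (L - zI)^{-1} g: y lies in the domain of L (y \<in> L^2, y locally absolutely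
  continuous on [0,\<infinity>) with derivative y', L y = -iJy' - Vy \<in> L^2, and the boundary
  condition [I_m1 0] y(0) = 0), and (L - zI) y = g almost everywhere.\<close>
definition resolvent_image ::
  "(real \<Rightarrow> complex^'b::finite^'a::finite) \<Rightarrow> complex \<Rightarrow> (real \<Rightarrow> complex^('a::finite+'b::finite)) \<Rightarrow> (real \<Rightarrow> complex^('a::finite+'b::finite)) \<Rightarrow> bool" where
  "resolvent_image v z g y \<longleftrightarrow>
     L2_vec {0..} y \<and>
     (\<forall>i. y 0 $ Inl i = 0) \<and>
     (\<exists>y'. (\<forall>x\<ge>0. y' absolutely_integrable_on {0..x} \<and> (y' has_integral (y x - y 0)) {0..x})
        \<and> L2_vec {0..} (\<lambda>x. - (\<i> *s (Jmat *v y' x)) - Vmat v x *v y x)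
        \<and> (AE x in lebesgue_on {0..}. - (\<i> *s (Jmat *v y' x)) - Vmat v x *v y x - z *s y x = g x))"

end

(*
  With y = Y e_j the j-th column of the resolvent and e(x) = e^{ixzJ} [I; 0] e_j, the function
  y + e - u(., z) [I; phi(z)] e_j solves the homogeneous Dirac system. Its first block vanishes
  at 0 by the boundary condition; its second block is square integrable and, since V = 0 beyond a,
  grows like e^{x Im z} there, so it vanishes at a. Along solutions the form D^* J D decreases
  with derivative -2 Im z |D|^2, which forces D(0) = 0, i.e. phi(z) e_j is the second block of
  y(0). Multiplying the second block of the resolvent equation by e^{ixz} and integrating over
  [0, a] expresses y(0) as i times the integral of e^{ixz} (V (y + e)) over [0, a], whose two
  summands are the two integrals of the formula.
*)

theory Submission
  imports Defs
begin

lemma sigma_finite_measure_lebesgue: "sigma_finite_measure (lebesgue :: real measure)"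
  unfolding sigma_finite_measure_def
proof (intro exI[of _ "range (\<lambda>n::nat. {-real n..real n})"] conjI)
  have "\<exists>n::nat. x \<in> {-real n..real n}" for x :: real
  proof -
    obtain n :: nat where "\<bar>x\<bar> \<le> real n"
      using real_arch_simple by blast
    then show ?thesis
      by (intro exI[of _ n]) (auto simp: abs_le_iff)
  qed
  then show "\<Union> (range (\<lambda>n::nat. {-real n..real n})) = space lebesgue"
    by auto
qed auto

lemma set_integrable_iff_integrable_lebesgue_on:
  fixes f :: "'a::euclidean_space \<Rightarrow> 'b::{banach, second_countable_topology}"
  shows "S \<in> sets lebesgue \<Longrightarrow> set_integrable lebesgue S f \<longleftrightarrow> integrable (lebesgue_on S) f"
  unfolding set_integrable_def using integrable_restrict_space[of S lebesgue f] by simp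

lemma absolutely_integrable_continuous_mult:
  fixes g f :: "real \<Rightarrow> complex"
  assumes "continuous_on {c..d} g" "f absolutely_integrable_on {c..d}"
  shows "(\<lambda>x. g x * f x) absolutely_integrable_on {c..d}"
proof (rule absolutely_integrable_bounded_measurable_product[OF bilinear_times])
  show "g \<in> borel_measurable (lebesgue_on {c..d})"
    by (rule continuous_imp_measurable_on_sets_lebesgue[OF assms(1)]) auto
  show "bounded (g ` {c..d})"
    by (intro compact_imp_bounded compact_continuous_image assms(1)) auto
qed (use assms in auto)

lemma integrable_lebesgue_pair_triangle:
  fixes F G :: "real \<Rightarrow> complex"
  assumes F: "integrable lebesgue F" and G: "integrable lebesgue G"
  shows "integrable (lebesgue \<Otimes>\<^sub>M lebesgue) (\<lambda>(t, s). F t * (indicator {..t} s *\<^sub>R G s))"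
    (is "integrable _ (\<lambda>(t, s). ?H t s)")
proof -
  have [measurable]: "F \<in> borel_measurable lebesgue" "G \<in> borel_measurable lebesgue"
    using F G by auto
  have id: "(\<lambda>x::real. x) \<in> borel_measurable lebesgue"
    by (simp add: measurable_completion)
  have [measurable]: "(\<lambda>p. F (fst p)) \<in> borel_measurable (lebesgue \<Otimes>\<^sub>M lebesgue)"
    "(\<lambda>p. G (snd p)) \<in> borel_measurable (lebesgue \<Otimes>\<^sub>M lebesgue)"
    using measurable_compose[OF measurable_fst \<open>F \<in> _\<close>] measurable_compose[OF measurable_snd \<open>G \<in> _\<close>]
    by simp_all
  have "(\<lambda>p::real \<times> real. fst p) \<in> borel_measurable (lebesgue \<Otimes>\<^sub>M lebesgue)"
    using measurable_compose[OF measurable_fst id] by blast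
  moreover have "(\<lambda>p::real \<times> real. snd p) \<in> borel_measurable (lebesgue \<Otimes>\<^sub>M lebesgue)"
    using measurable_compose[OF measurable_snd id] by blast
  ultimately have [measurable]: "Measurable.pred (lebesgue \<Otimes>\<^sub>M lebesgue) (\<lambda>p::real \<times> real. snd p \<in> {..fst p})"
    by simp
  have H: "(\<lambda>(t, s). ?H t s) \<in> borel_measurable (lebesgue \<Otimes>\<^sub>M lebesgue)"
    by measurable
  show ?thesis
  proof (rule integrableI_bounded[OF H])
    have "(\<integral>\<^sup>+ p. ennreal (norm ((\<lambda>(t, s). ?H t s) p)) \<partial>(lebesgue \<Otimes>\<^sub>M lebesgue))
        = (\<integral>\<^sup>+ t. (\<integral>\<^sup>+ s. ennreal (norm (?H t s)) \<partial>lebesgue) \<partial>lebesgue)"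
      using sigma_finite_measure.nn_integral_fst[OF sigma_finite_measure_lebesgue,
          of "\<lambda>p. ennreal (norm ((\<lambda>(t, s). ?H t s) p))" lebesgue] H
      by simp
    also have "\<dots> \<le> (\<integral>\<^sup>+ t. (\<integral>\<^sup>+ s. ennreal (norm (F t)) * ennreal (norm (G s)) \<partial>lebesgue) \<partial>lebesgue)"
      by (intro nn_integral_mono)
         (auto simp: norm_mult ennreal_mult[symmetric] indicator_def mult_left_mono)
    also have "\<dots> = (\<integral>\<^sup>+ t. ennreal (norm (F t)) * (\<integral>\<^sup>+ s. ennreal (norm (G s)) \<partial>lebesgue) \<partial>lebesgue)"
      by (intro nn_integral_cong nn_integral_cmult) auto
    also have "\<dots> = (\<integral>\<^sup>+ t. ennreal (norm (F t)) \<partial>lebesgue) * (\<integral>\<^sup>+ s. ennreal (norm (G s)) \<partial>lebesgue)"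
      by (rule nn_integral_multc) auto
    also have "\<dots> < \<infinity>"
      using F G by (simp add: integrable_iff_bounded ennreal_mult_less_top)
    finally show "(\<integral>\<^sup>+ p. ennreal (norm ((\<lambda>(t, s). ?H t s) p)) \<partial>(lebesgue \<Otimes>\<^sub>M lebesgue)) < \<infinity>" .
  qed
qed

lemma set_integral_triangle_swap:
  fixes f g :: "real \<Rightarrow> complex"
  assumes f: "f absolutely_integrable_on {c..d}" and g: "g absolutely_integrable_on {c..d}"
  shows "(LINT t:{c..d}|lebesgue. f t * (LINT s:{c..t}|lebesgue. g s))
       = (LINT s:{c..d}|lebesgue. g s * (LINT t:{s..d}|lebesgue. f t))"
proof -
  interpret pair_sigma_finite "lebesgue :: real measure" "lebesgue :: real measure"
    by (simp add: pair_sigma_finite_def sigma_finite_measure_lebesgue)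
  define F where "F = (\<lambda>t. indicator {c..d} t *\<^sub>R f t)"
  define G where "G = (\<lambda>s. indicator {c..d} s *\<^sub>R g s)"
  define H where "H t s = F t * (indicator {..t} s *\<^sub>R G s)" for t s
  have "integrable lebesgue F" "integrable lebesgue G"
    using f g by (simp_all add: F_def G_def set_integrable_def)
  from integrable_lebesgue_pair_triangle[OF this]
  have H: "integrable (lebesgue \<Otimes>\<^sub>M lebesgue) (\<lambda>(t, s). H t s)"
    by (simp add: H_def)
  have inner_s: "(\<integral>s. H t s \<partial>lebesgue) = F t * (LINT s:{c..t}|lebesgue. g s)" for t
  proof (cases "t \<in> {c..d}")
    case True
    then have "(\<lambda>s. H t s) = (\<lambda>s. F t * (indicator {c..t} s *\<^sub>R g s))"
      by (auto simp: H_def G_def indicator_def)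
    then show ?thesis
      unfolding set_lebesgue_integral_def by (simp only: integral_mult_right_zero)
  qed (simp add: H_def F_def)
  have inner_t: "(\<integral>t. H t s \<partial>lebesgue) = G s * (LINT t:{s..d}|lebesgue. f t)" for s
  proof (cases "s \<in> {c..d}")
    case True
    then have "(\<lambda>t. H t s) = (\<lambda>t. G s * (indicator {s..d} t *\<^sub>R f t))"
      by (auto simp: H_def F_def indicator_def)
    then show ?thesis
      unfolding set_lebesgue_integral_def by (simp only: integral_mult_right_zero)
  qed (simp add: H_def G_def)
  have "(\<integral>t. (\<integral>s. H t s \<partial>lebesgue) \<partial>lebesgue) = (\<integral>s. (\<integral>t. H t s \<partial>lebesgue) \<partial>lebesgue)"
    using Fubini_integral[OF H] by simp
  then show ?thesis
    unfolding inner_s inner_t by (simp add: set_lebesgue_integral_def F_def G_def)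
qed

lemma set_integral_zero_outside:
  assumes "A \<subseteq> B" and "\<And>x. x \<in> B - A \<Longrightarrow> f x = 0"
  shows "set_integrable M B f \<longleftrightarrow> set_integrable M A f"
    and "(LINT x:B|M. f x) = (LINT x:A|M. f x)"
proof -
  have "(\<lambda>x. indicator B x *\<^sub>R f x) = (\<lambda>x. indicator A x *\<^sub>R f x)"
    using assms by (auto simp: fun_eq_iff indicator_def)
  then show "set_integrable M B f \<longleftrightarrow> set_integrable M A f" "(LINT x:B|M. f x) = (LINT x:A|M. f x)"
    by (simp_all add: set_integrable_def set_lebesgue_integral_def)
qed

lemma integrable_vec_componentwise:
  fixes f :: "'a \<Rightarrow> 'b::euclidean_space^'n::finite"
  assumes "\<And>i. integrable M (\<lambda>x. f x $ i)"
  shows "integrable M f"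
proof -
  have "linear (axis i :: 'b \<Rightarrow> 'b^'n)" for i
    by (rule linearI) (simp_all add: axis_def vec_eq_iff)
  then have "bounded_linear (axis i :: 'b \<Rightarrow> 'b^'n)" for i
    using linear_conv_bounded_linear by blast
  then have "integrable M (\<lambda>x. \<Sum>i\<in>UNIV. axis i (f x $ i))"
    by (intro Bochner_Integration.integrable_sum) (rule integrable_bounded_linear[OF _ assms])
  moreover have "f x = (\<Sum>i\<in>UNIV. axis i (f x $ i))" for x
    by (simp add: vec_eq_iff axis_def sum_component)
  ultimately show ?thesis
    by simp
qed

lemma set_lebesgue_integral_matrix_nth:
  fixes F :: "real \<Rightarrow> complex^'n::finite^'m::finite"
  assumes "\<And>i j. set_integrable lebesgue S (\<lambda>x. F x $ i $ j)"
  shows "(LINT x:S|lebesgue. F x) $ i $ j = (LINT x:S|lebesgue. F x $ i $ j)"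
proof -
  have "integrable lebesgue (\<lambda>x. indicator S x *\<^sub>R F x)"
    using assms by (intro integrable_vec_componentwise) (simp add: set_integrable_def)
  from integral_bounded_linear[OF bounded_linear_compose[OF bounded_linear_vec_nth[of j]
        bounded_linear_vec_nth[of i]] this]
  show ?thesis
    by (simp add: set_lebesgue_integral_def)
qed

lemma has_integral_mult_vec_nth:
  fixes I :: "'a::euclidean_space \<Rightarrow> complex^'n::finite^'m::finite"
  assumes "(I has_integral A) S"
  shows "((\<lambda>t. (I t *v c) $ l) has_integral (A *v c) $ l) S"
proof -
  have "((\<lambda>t. I t $ l $ m) has_integral A $ l $ m) S" for m
    using has_integral_linear[OF assms
        bounded_linear_compose[OF bounded_linear_vec_nth[of m] bounded_linear_vec_nth[of l]]]
    by (simp only: o_def)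
  then have "((\<lambda>t. \<Sum>m\<in>UNIV. I t $ l $ m * c $ m) has_integral (\<Sum>m\<in>UNIV. A $ l $ m * c $ m)) S"
    by (intro has_integral_sum has_integral_mult_left) auto
  then show ?thesis
    by (simp only: matrix_vector_mult_def vec_lambda_beta)
qed

lemma AE_lebesgue_on_imp_negligible:
  assumes "AE x in lebesgue_on S. P x" and "S \<in> sets lebesgue"
  obtains N where "negligible N" and "\<And>x. x \<in> S \<Longrightarrow> x \<notin> N \<Longrightarrow> P x"
proof -
  obtain N where N: "N \<in> null_sets (lebesgue_on S)" "\<And>x. x \<in> space (lebesgue_on S) - N \<Longrightarrow> P x"
    using AE_E3[OF assms(1)] by blast
  then have "negligible N"
    using null_sets_restrict_space[OF assms(2)] by (auto simp: negligible_iff_null_sets)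
  with N(2) show ?thesis
    using that by auto
qed

section \<open>Absolutely continuous primitives\<close>

lemma primitive_continuous_on:
  fixes f f' :: "real \<Rightarrow> 'a::banach"
  assumes "\<And>x. x \<in> {c..d} \<Longrightarrow> (f' has_integral (f x - f c)) {c..x}"
  shows "continuous_on {c..d} f"
proof (cases "c \<le> d")
  case True
  then have "f' integrable_on {c..d}"
    by (intro has_integral_integrable[OF assms[of d]]) auto
  then have "continuous_on {c..d} (\<lambda>x. f c + integral {c..x} f')"
    by (intro continuous_intros indefinite_integral_continuous_1)
  moreover have "f c + integral {c..x} f' = f x" if "x \<in> {c..d}" for x
    using integral_unique[OF assms[OF that]] by simp
  ultimately show ?thesis
    by (rule continuous_on_eq)
qed simp

definition ac_primitive :: "real \<Rightarrow> real \<Rightarrow> (real \<Rightarrow> complex) \<Rightarrow> (real \<Rightarrow> complex) \<Rightarrow> bool" where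
  "ac_primitive c d f f' \<longleftrightarrow> f' absolutely_integrable_on {c..d} \<and>
     (\<forall>x\<in>{c..d}. (f' has_integral (f x - f c)) {c..x})"

lemma ac_primitive_has_integral:
  "ac_primitive c d f f' \<Longrightarrow> c \<le> d \<Longrightarrow> (f' has_integral (f d - f c)) {c..d}"
  by (simp add: ac_primitive_def)

lemma ac_primitive_integral:
  "ac_primitive c d f f' \<Longrightarrow> x \<in> {c..d} \<Longrightarrow> integral {c..x} f' = f x - f c"
  by (simp add: ac_primitive_def integral_unique)

lemma ac_primitive_vec_nth:
  fixes y y' :: "real \<Rightarrow> complex^'n::finite"
  assumes "y' absolutely_integrable_on {c..d}" and "\<And>x. x \<in> {c..d} \<Longrightarrow> (y' has_integral (y x - y c)) {c..x}"
  shows "ac_primitive c d (\<lambda>t. y t $ k) (\<lambda>t. y' t $ k)"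
  unfolding ac_primitive_def
proof safe
  from absolutely_integrable_linear[OF assms(1) bounded_linear_vec_nth]
  show "(\<lambda>t. y' t $ k) absolutely_integrable_on {c..d}"
    by (simp add: o_def)
  fix x assume "x \<in> {c..d}"
  from has_integral_linear[OF assms(2)[OF this] bounded_linear_vec_nth]
  show "((\<lambda>t. y' t $ k) has_integral y x $ k - y c $ k) {c..x}"
    by (simp add: o_def)
qed

lemma ac_primitive_continuous: "ac_primitive c d f f' \<Longrightarrow> continuous_on {c..d} f"
  by (rule primitive_continuous_on[where f' = f']) (simp add: ac_primitive_def)

lemma ac_primitive_subinterval:
  assumes f: "ac_primitive c d f f'" and "c \<le> c'" "c' \<le> d'" "d' \<le> d"
  shows "ac_primitive c' d' f f'"
  unfolding ac_primitive_def
proof safe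
  show "f' absolutely_integrable_on {c'..d'}"
    using f assms by (auto simp: ac_primitive_def intro: set_integrable_subset)
  fix x assume x: "x \<in> {c'..d'}"
  have "f' integrable_on {c..x}"
    using f x assms by (auto simp: ac_primitive_def)
  then have "f' integrable_on {c'..x}"
    by (rule integrable_subinterval_real) (use assms in auto)
  moreover have "integral {c..c'} f' + integral {c'..x} f' = integral {c..x} f'"
    using Henstock_Kurzweil_Integration.integral_combine[of c c' x f'] \<open>f' integrable_on {c..x}\<close> x assms(2)
    by auto
  moreover have "integral {c..c'} f' = f c' - f c" "integral {c..x} f' = f x - f c"
    using ac_primitive_integral[OF f] x assms by auto
  ultimately have "integral {c'..x} f' = f x - f c'"
    by (simp add: algebra_simps)
  with \<open>f' integrable_on {c'..x}\<close> show "(f' has_integral f x - f c') {c'..x}"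
    by (metis integrable_integral)
qed

lemma ac_primitive_spike:
  assumes "ac_primitive c d f f'" "negligible N" "\<And>t. t \<in> {c..d} - N \<Longrightarrow> g' t = f' t"
  shows "ac_primitive c d f g'"
  unfolding ac_primitive_def
proof safe
  show "g' absolutely_integrable_on {c..d}"
    by (rule absolutely_integrable_spike[OF _ assms(2)]) (use assms in \<open>auto simp: ac_primitive_def\<close>)
  fix x assume "x \<in> {c..d}"
  then show "(g' has_integral (f x - f c)) {c..x}"
    using has_integral_spike[OF assms(2), of "{c..x}" g' f'] assms by (auto simp: ac_primitive_def)
qed

lemma ac_primitive_const: "ac_primitive c d (\<lambda>t. k) (\<lambda>t. 0)"
  by (simp add: ac_primitive_def)

lemma ac_primitive_add:
  assumes "ac_primitive c d f f'" "ac_primitive c d g g'"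
  shows "ac_primitive c d (\<lambda>t. f t + g t) (\<lambda>t. f' t + g' t)"
  unfolding ac_primitive_def
proof safe
  show "(\<lambda>t. f' t + g' t) absolutely_integrable_on {c..d}"
    using assms set_integral_add(1) by (auto simp: ac_primitive_def)
  fix x assume "x \<in> {c..d}"
  then have "((\<lambda>t. f' t + g' t) has_integral (f x - f c) + (g x - g c)) {c..x}"
    using assms by (intro has_integral_add) (auto simp: ac_primitive_def)
  then show "((\<lambda>t. f' t + g' t) has_integral f x + g x - (f c + g c)) {c..x}"
    by (simp add: algebra_simps)
qed

lemma ac_primitive_diff:
  assumes "ac_primitive c d f f'" "ac_primitive c d g g'"
  shows "ac_primitive c d (\<lambda>t. f t - g t) (\<lambda>t. f' t - g' t)"
  unfolding ac_primitive_def
proof safe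
  show "(\<lambda>t. f' t - g' t) absolutely_integrable_on {c..d}"
    using assms set_integral_diff(1) by (auto simp: ac_primitive_def)
  fix x assume "x \<in> {c..d}"
  then have "((\<lambda>t. f' t - g' t) has_integral (f x - f c) - (g x - g c)) {c..x}"
    using assms by (intro has_integral_diff) (auto simp: ac_primitive_def)
  then show "((\<lambda>t. f' t - g' t) has_integral f x - g x - (f c - g c)) {c..x}"
    by (simp add: algebra_simps)
qed

lemma ac_primitive_cnj:
  assumes "ac_primitive c d f f'"
  shows "ac_primitive c d (\<lambda>t. cnj (f t)) (\<lambda>t. cnj (f' t))"
  unfolding ac_primitive_def
proof safe
  have "f' absolutely_integrable_on {c..d}"
    using assms by (simp add: ac_primitive_def)
  from absolutely_integrable_linear[OF this bounded_linear_cnj]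
  show "(\<lambda>t. cnj (f' t)) absolutely_integrable_on {c..d}"
    by (simp add: o_def)
  fix x assume "x \<in> {c..d}"
  then show "((\<lambda>t. cnj (f' t)) has_integral cnj (f x) - cnj (f c)) {c..x}"
    using has_integral_cnj[of f' "f x - f c" "{c..x}"] assms by (simp add: ac_primitive_def o_def)
qed

lemma ac_primitive_exp:
  assumes "c \<le> d"
  shows "ac_primitive c d (\<lambda>t. exp (w * of_real t)) (\<lambda>t. w * exp (w * of_real t))"
  unfolding ac_primitive_def
proof safe
  show "(\<lambda>t. w * exp (w * of_real t)) absolutely_integrable_on {c..d}"
    by (intro absolutely_integrable_continuous_real continuous_intros)
  fix x assume "x \<in> {c..d}"
  then show "((\<lambda>t. w * exp (w * of_real t)) has_integral exp (w * of_real x) - exp (w * of_real c)) {c..x}"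
    by (intro fundamental_theorem_of_calculus has_vector_derivative_real_field)
       (auto intro!: derivative_eq_intros)
qed

text \<open>Both sides are the integral of \<open>f' t * g' s\<close> over the triangle \<open>c \<le> s \<le> t \<le> d\<close>.\<close>

lemma ac_primitive_integral_swap:
  fixes f g f' g' :: "real \<Rightarrow> complex"
  assumes f: "ac_primitive c d f f'" and g: "ac_primitive c d g g'"
  shows "integral {c..d} (\<lambda>t. (g t - g c) * f' t) = integral {c..d} (\<lambda>t. (f d - f t) * g' t)"
proof -
  have f': "f' absolutely_integrable_on {c..d}" and g': "g' absolutely_integrable_on {c..d}"
    using f g by (simp_all add: ac_primitive_def)
  have fc: "continuous_on {c..d} f" and gc: "continuous_on {c..d} g"
    using f g by (simp_all add: ac_primitive_continuous)
  have prim_g: "(LINT s:{c..t}|lebesgue. g' s) = g t - g c" if "t \<in> {c..d}" for t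
    using set_lebesgue_integral_eq_integral(2)[OF set_integrable_subset[OF g']]
      ac_primitive_integral[OF g that] that by auto
  have prim_f: "(LINT t:{s..d}|lebesgue. f' t) = f d - f s" if "s \<in> {c..d}" for s
    using set_lebesgue_integral_eq_integral(2)[OF set_integrable_subset[OF f']]
      ac_primitive_integral[OF ac_primitive_subinterval[OF f, of s d], of d] that by auto
  have int_fg: "(\<lambda>t. (g t - g c) * f' t) absolutely_integrable_on {c..d}"
    and int_gf: "(\<lambda>t. (f d - f t) * g' t) absolutely_integrable_on {c..d}"
    by (intro absolutely_integrable_continuous_mult f' g' continuous_on_diff continuous_on_const fc gc)+
  have "integral {c..d} (\<lambda>t. (g t - g c) * f' t) = (LINT t:{c..d}|lebesgue. (g t - g c) * f' t)"
    by (rule set_lebesgue_integral_eq_integral(2)[OF int_fg, symmetric])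
  also have "\<dots> = (LINT t:{c..d}|lebesgue. f' t * (LINT s:{c..t}|lebesgue. g' s))"
    by (rule set_lebesgue_integral_cong) (auto simp: prim_g)
  also have "\<dots> = (LINT s:{c..d}|lebesgue. g' s * (LINT t:{s..d}|lebesgue. f' t))"
    by (rule set_integral_triangle_swap[OF f' g'])
  also have "\<dots> = (LINT t:{c..d}|lebesgue. (f d - f t) * g' t)"
    by (rule set_lebesgue_integral_cong) (auto simp: prim_f)
  also have "\<dots> = integral {c..d} (\<lambda>t. (f d - f t) * g' t)"
    by (rule set_lebesgue_integral_eq_integral(2)[OF int_gf])
  finally show ?thesis .
qed

lemma ac_primitive_mult_has_integral:
  fixes f g f' g' :: "real \<Rightarrow> complex"
  assumes "c \<le> d" and f: "ac_primitive c d f f'" and g: "ac_primitive c d g g'"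
  shows "((\<lambda>t. f' t * g t + f t * g' t) has_integral (f d * g d - f c * g c)) {c..d}"
proof -
  have f': "f' absolutely_integrable_on {c..d}" and g': "g' absolutely_integrable_on {c..d}"
    using f g by (simp_all add: ac_primitive_def)
  have fc: "continuous_on {c..d} f" and gc: "continuous_on {c..d} g"
    using f g by (simp_all add: ac_primitive_continuous)
  define A where "A = integral {c..d} (\<lambda>t. g t * f' t)"
  define B where "B = integral {c..d} (\<lambda>t. f t * g' t)"
  have A: "((\<lambda>t. g t * f' t) has_integral A) {c..d}" and B: "((\<lambda>t. f t * g' t) has_integral B) {c..d}"
    unfolding A_def B_def
    by (intro integrable_integral set_lebesgue_integral_eq_integral(1)
        absolutely_integrable_continuous_mult f' g' fc gc)+
  have "((\<lambda>t. (g t - g c) * f' t) has_integral A - g c * (f d - f c)) {c..d}"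
    using has_integral_diff[OF A has_integral_mult_right[OF ac_primitive_has_integral[OF f assms(1)], where c="g c"]]
    by (simp add: algebra_simps)
  moreover have "((\<lambda>t. (f d - f t) * g' t) has_integral f d * (g d - g c) - B) {c..d}"
    using has_integral_diff[OF has_integral_mult_right[OF ac_primitive_has_integral[OF g assms(1)], where c="f d"] B]
    by (simp add: algebra_simps)
  ultimately have "A - g c * (f d - f c) = f d * (g d - g c) - B"
    using ac_primitive_integral_swap[OF f g] by (simp add: integral_unique)
  then have "A + B = f d * g d - f c * g c"
    by (simp add: algebra_simps)
  then show ?thesis
    using has_integral_add[OF A B] by (simp add: mult.commute)
qed

lemma ac_primitive_mult:
  fixes f g f' g' :: "real \<Rightarrow> complex"
  assumes f: "ac_primitive c d f f'" and g: "ac_primitive c d g g'"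
  shows "ac_primitive c d (\<lambda>t. f t * g t) (\<lambda>t. f' t * g t + f t * g' t)"
  unfolding ac_primitive_def
proof safe
  have "(\<lambda>t. g t * f' t) absolutely_integrable_on {c..d}"
    using f g by (intro absolutely_integrable_continuous_mult) (auto simp: ac_primitive_def ac_primitive_continuous)
  moreover have "(\<lambda>t. f t * g' t) absolutely_integrable_on {c..d}"
    using f g by (intro absolutely_integrable_continuous_mult) (auto simp: ac_primitive_def ac_primitive_continuous)
  ultimately show "(\<lambda>t. f' t * g t + f t * g' t) absolutely_integrable_on {c..d}"
    using set_integral_add(1) by (simp add: mult.commute)
  fix x assume x: "x \<in> {c..d}"
  then have "ac_primitive c x f f'" "ac_primitive c x g g'"
    using ac_primitive_subinterval[OF f, of c x] ac_primitive_subinterval[OF g, of c x] by auto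
  with x show "((\<lambda>t. f' t * g t + f t * g' t) has_integral f x * g x - f c * g c) {c..x}"
    by (intro ac_primitive_mult_has_integral) auto
qed

lemma ac_primitive_linear_ode:
  assumes h: "ac_primitive c d h (\<lambda>t. w * h t)" and t: "t \<in> {c..d}"
  shows "h t = exp (w * of_real (t - c)) * h c"
proof -
  have "ac_primitive c d (\<lambda>t. exp (- w * of_real t) * h t)
          (\<lambda>t. - w * exp (- w * of_real t) * h t + exp (- w * of_real t) * (w * h t))"
    using t by (intro ac_primitive_mult[OF ac_primitive_exp[of c d "- w"] h]) auto
  then have "ac_primitive c d (\<lambda>t. exp (- w * of_real t) * h t) (\<lambda>t. 0)"
    by (simp add: algebra_simps)
  from ac_primitive_integral[OF this t]
  have E: "exp (- w * of_real t) * h t = exp (- w * of_real c) * h c"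
    by simp
  have "h t = exp (w * of_real t) * exp (- w * of_real t) * h t"
    using exp_minus_inverse[of "w * of_real t"] by simp
  also have "\<dots> = exp (w * of_real t) * exp (- w * of_real c) * h c"
    by (simp only: mult.assoc E)
  also have "exp (w * of_real t) * exp (- w * of_real c) = exp (w * of_real t + - w * of_real c)"
    by (rule exp_add[symmetric])
  also have "w * of_real t + - w * of_real c = w * of_real (t - c)"
    by (simp add: algebra_simps)
  finally show ?thesis .
qed

section \<open>Square integrable functions\<close>

lemma L2_on_set_integrable_square:
  "L2_on S f \<Longrightarrow> S \<in> sets lebesgue \<Longrightarrow> set_integrable lebesgue S (\<lambda>x. (cmod (f x))\<^sup>2)"
  by (simp add: L2_on_def set_integrable_iff_integrable_lebesgue_on)

lemma L2_on_absolutely_integrable: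
  assumes f: "L2_on S f" and S: "S \<in> sets lebesgue" and cd: "{c..d} \<subseteq> S"
  shows "f absolutely_integrable_on {c..d}"
proof -
  have "(\<lambda>x. (cmod (f x))\<^sup>2) absolutely_integrable_on {c..d}"
    using set_integrable_subset[OF L2_on_set_integrable_square[OF f S] _ cd] by simp
  then have "(\<lambda>x. 1 + (cmod (f x))\<^sup>2) absolutely_integrable_on {c..d}"
    using set_integral_add(1)[OF absolutely_integrable_on_const] by blast
  then have bound: "integrable (lebesgue_on {c..d}) (\<lambda>x. 1 + (cmod (f x))\<^sup>2)"
    by (simp add: set_integrable_iff_integrable_lebesgue_on)
  have "f \<in> borel_measurable (lebesgue_on {c..d})"
    using f cd S by (auto simp: L2_on_def intro: measurable_restrict_mono)
  moreover have "norm (f x) \<le> norm (1 + (cmod (f x))\<^sup>2)" for x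
  proof -
    have "cmod (f x) \<le> 1 + (cmod (f x))\<^sup>2"
      using zero_le_power2[of "cmod (f x) - 1"] norm_ge_zero[of "f x"]
      unfolding power2_diff power_one mult_1_right by linarith
    then show ?thesis
      by simp
  qed
  ultimately have "integrable (lebesgue_on {c..d}) f"
    by (intro Bochner_Integration.integrable_bound[OF bound]) auto
  then show ?thesis
    by (simp add: set_integrable_iff_integrable_lebesgue_on)
qed

lemma L2_on_diff:
  assumes f: "L2_on S f" and g: "L2_on S g"
  shows "L2_on S (\<lambda>x. f x - g x)"
  unfolding L2_on_def
proof
  have [measurable]: "f \<in> borel_measurable (lebesgue_on S)" "g \<in> borel_measurable (lebesgue_on S)"
    using f g by (simp_all add: L2_on_def)
  show "(\<lambda>x. f x - g x) \<in> borel_measurable (lebesgue_on S)"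
    by measurable
  have bound: "integrable (lebesgue_on S) (\<lambda>x. 2 * (cmod (f x))\<^sup>2 + 2 * (cmod (g x))\<^sup>2)"
    using f g by (simp add: L2_on_def)
  have "(cmod (f x - g x))\<^sup>2 \<le> 2 * (cmod (f x))\<^sup>2 + 2 * (cmod (g x))\<^sup>2" for x
  proof -
    have "(cmod (f x - g x))\<^sup>2 \<le> (cmod (f x) + cmod (g x))\<^sup>2"
      by (intro power_mono norm_triangle_ineq4) simp
    also have "\<dots> \<le> 2 * (cmod (f x))\<^sup>2 + 2 * (cmod (g x))\<^sup>2"
      using zero_le_power2[of "cmod (f x) - cmod (g x)"] unfolding power2_diff power2_sum by linarith
    finally show ?thesis .
  qed
  then show "integrable (lebesgue_on S) (\<lambda>x. (cmod (f x - g x))\<^sup>2)"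
    by (intro Bochner_Integration.integrable_bound[OF bound]) auto
qed

lemma L2_on_norm_lower_bound_zero:
  assumes h: "L2_on {0..} h" and "0 \<le> a" and bound: "\<And>t. a \<le> t \<Longrightarrow> cmod (h a) \<le> cmod (h t)"
  shows "h a = 0"
proof (rule ccontr)
  assume "h a \<noteq> 0"
  define C where "C = integral {0..} (\<lambda>x. (cmod (h x))\<^sup>2)"
  have int: "(\<lambda>x. (cmod (h x))\<^sup>2) integrable_on {0..}"
    using set_lebesgue_integral_eq_integral(1)[OF L2_on_set_integrable_square[OF h]] by simp
  have "real n * (cmod (h a))\<^sup>2 \<le> C" for n
  proof -
    have int_n: "(\<lambda>x. (cmod (h x))\<^sup>2) integrable_on {a..a + real n}"
      by (rule integrable_on_subinterval[OF int]) (use \<open>0 \<le> a\<close> in auto)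
    have "real n * (cmod (h a))\<^sup>2 = integral {a..a + real n} (\<lambda>x. (cmod (h a))\<^sup>2)"
      by simp
    also have "\<dots> \<le> integral {a..a + real n} (\<lambda>x. (cmod (h x))\<^sup>2)"
      by (rule integral_le[OF integrable_const_ivl int_n]) (auto intro!: power_mono bound)
    also have "\<dots> \<le> C"
      unfolding C_def by (rule integral_subset_le[OF _ int_n int]) (use \<open>0 \<le> a\<close> in auto)
    finally show ?thesis .
  qed
  moreover obtain n where "C < real n * (cmod (h a))\<^sup>2"
    using \<open>h a \<noteq> 0\<close> reals_Archimedean3[of "(cmod (h a))\<^sup>2"] by auto
  ultimately show False
    by (meson not_le)
qed

lemma ac_primitive_exp_growth_L2_zero:
  assumes z: "0 < Im z" and "0 \<le> a" and h: "\<And>b. a \<le> b \<Longrightarrow> ac_primitive a b h (\<lambda>t. - \<i> * z * h t)"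
    and "L2_on {0..} h"
  shows "h a = 0"
proof (rule L2_on_norm_lower_bound_zero[OF \<open>L2_on {0..} h\<close> \<open>0 \<le> a\<close>])
  fix t assume "a \<le> t"
  then have "h t = exp (- \<i> * z * of_real (t - a)) * h a"
    using ac_primitive_linear_ode[OF h[of t], of t] by simp
  then have ht: "cmod (h t) = cmod (exp (- \<i> * z * of_real (t - a))) * cmod (h a)"
    by (simp only: norm_mult)
  have "1 \<le> cmod (exp (- \<i> * z * of_real (t - a)))"
    using \<open>a \<le> t\<close> z by (simp add: norm_exp_eq_Re)
  from mult_right_mono[OF this norm_ge_zero[of "h a"]]
  show "cmod (h a) \<le> cmod (h t)"
    unfolding ht by simp
qed

section \<open>Hermitian systems with a signature matrix\<close>

lemma hermitian_form_real:
  fixes V :: "complex^'k::finite^'k"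
  assumes "\<And>k l. cnj (V $ k $ l) = V $ l $ k"
  shows "Im (\<Sum>k\<in>UNIV. (V *v x) $ k * cnj (x $ k)) = 0"
proof -
  define q where "q = (\<Sum>k\<in>UNIV. (V *v x) $ k * cnj (x $ k))"
  have "cnj q = (\<Sum>k\<in>UNIV. \<Sum>l\<in>UNIV. V $ l $ k * cnj (x $ l) * x $ k)"
    by (simp add: q_def matrix_vector_mult_def sum_distrib_right assms)
  also have "\<dots> = (\<Sum>l\<in>UNIV. \<Sum>k\<in>UNIV. V $ l $ k * x $ k * cnj (x $ l))"
    by (subst sum.swap) (simp add: mult_ac)
  also have "\<dots> = q"
    by (simp add: q_def matrix_vector_mult_def sum_distrib_right)
  finally have "Im (cnj q) = Im q"
    by (rule arg_cong)
  then show ?thesis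
    unfolding q_def[symmetric] by simp
qed

lemma signature_form_derivative:
  fixes V :: "complex^'k::finite^'k" and s :: "'k \<Rightarrow> real" and x :: "complex^'k"
  assumes s: "\<And>k. s k * s k = 1" and V: "\<And>k l. cnj (V $ k $ l) = V $ l $ k"
    and x': "\<And>k. x' k = \<i> * of_real (s k) * ((V *v x) $ k + z * x $ k)"
  shows "(\<Sum>k\<in>UNIV. s k * Re (x' k * cnj (x $ k) + x $ k * cnj (x' k)))
       = - 2 * Im z * (\<Sum>k\<in>UNIV. (cmod (x $ k))\<^sup>2)"
proof -
  have summand: "s k * Re (x' k * cnj (x $ k) + x $ k * cnj (x' k))
      = - 2 * Im ((V *v x) $ k * cnj (x $ k)) - 2 * Im z * (cmod (x $ k))\<^sup>2" for k
  proof -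
    define X where "X = ((V *v x) $ k + z * x $ k) * cnj (x $ k)"
    have "x' k * cnj (x $ k) + x $ k * cnj (x' k) = \<i> * of_real (s k) * X + cnj (\<i> * of_real (s k) * X)"
      by (simp add: x' X_def mult_ac)
    then have "s k * Re (x' k * cnj (x $ k) + x $ k * cnj (x' k)) = - 2 * (s k * s k) * Im X"
      by simp
    moreover have "X = (V *v x) $ k * cnj (x $ k) + z * of_real ((cmod (x $ k))\<^sup>2)"
      unfolding X_def complex_norm_square by (simp add: algebra_simps)
    ultimately show ?thesis
      using s[of k] by simp
  qed
  have "(\<Sum>k\<in>UNIV. s k * Re (x' k * cnj (x $ k) + x $ k * cnj (x' k)))
      = - 2 * Im (\<Sum>k\<in>UNIV. (V *v x) $ k * cnj (x $ k)) - 2 * Im z * (\<Sum>k\<in>UNIV. (cmod (x $ k))\<^sup>2)"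
    by (simp only: summand sum_subtractf sum_distrib_left[symmetric] Im_sum)
  then show ?thesis
    using hermitian_form_real[OF V] by simp
qed

lemma signature_form_antitone:
  fixes D :: "real \<Rightarrow> complex^'k::finite" and V :: "real \<Rightarrow> complex^'k^'k" and s :: "'k \<Rightarrow> real"
  assumes z: "0 \<le> Im z" and "c \<le> d" and s: "\<And>k. s k * s k = 1"
    and V: "\<And>t k l. cnj (V t $ k $ l) = V t $ l $ k"
    and D: "\<And>k. ac_primitive c d (\<lambda>t. D t $ k) (\<lambda>t. \<i> * of_real (s k) * ((V t *v D t) $ k + z * D t $ k))"
  shows "(\<Sum>k\<in>UNIV. s k * (cmod (D d $ k))\<^sup>2) \<le> (\<Sum>k\<in>UNIV. s k * (cmod (D c $ k))\<^sup>2)"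
proof -
  define D' where "D' t k = \<i> * of_real (s k) * ((V t *v D t) $ k + z * D t $ k)" for t k
  define F where "F t k = D' t k * cnj (D t $ k) + D t $ k * cnj (D' t k)" for t k
  have "((\<lambda>t. F t k) has_integral D d $ k * cnj (D d $ k) - D c $ k * cnj (D c $ k)) {c..d}" for k
    unfolding F_def D'_def
    by (rule ac_primitive_has_integral[OF ac_primitive_mult[OF D ac_primitive_cnj[OF D]] \<open>c \<le> d\<close>])
  from has_integral_linear[OF this bounded_linear_Re]
  have "((\<lambda>t. Re (F t k)) has_integral (cmod (D d $ k))\<^sup>2 - (cmod (D c $ k))\<^sup>2) {c..d}" for k
    by (simp add: o_def complex_norm_square[symmetric])
  then have integral: "((\<lambda>t. \<Sum>k\<in>UNIV. s k * Re (F t k)) has_integral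
      (\<Sum>k\<in>UNIV. s k * ((cmod (D d $ k))\<^sup>2 - (cmod (D c $ k))\<^sup>2))) {c..d}"
    by (intro has_integral_sum has_integral_mult_right) auto
  have "(\<Sum>k\<in>UNIV. s k * Re (F t k)) = - 2 * Im z * (\<Sum>k\<in>UNIV. (cmod (D t $ k))\<^sup>2)" for t
    unfolding F_def by (rule signature_form_derivative[OF s V[of t]]) (simp add: D'_def)
  then have nonpos: "(\<Sum>k\<in>UNIV. s k * Re (F t k)) \<le> 0" for t
    using z by (simp add: sum_nonneg mult_nonneg_nonneg)
  have "(\<Sum>k\<in>UNIV. s k * ((cmod (D d $ k))\<^sup>2 - (cmod (D c $ k))\<^sup>2)) \<le> 0"
    using has_integral_le[OF integral has_integral_0] nonpos by blast
  then show ?thesis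
    by (simp add: right_diff_distrib sum_subtractf)
qed

lemma sum_UNIV_sum:
  "(\<Sum>k\<in>(UNIV :: ('a::finite + 'b::finite) set). f k) = (\<Sum>i\<in>UNIV. f (Inl i)) + (\<Sum>j\<in>UNIV. f (Inr j))"
  by (subst UNIV_Plus_UNIV[symmetric], subst sum.Plus) (auto simp: o_def)

definition Jsign :: "'a::finite + 'b::finite \<Rightarrow> real" where
  "Jsign k = (case k of Inl _ \<Rightarrow> 1 | Inr _ \<Rightarrow> -1)"

lemma Jsign_simps [simp]: "Jsign (Inl i) = 1" "Jsign (Inr j) = -1"
  by (simp_all add: Jsign_def)

lemma Jsign_square: "Jsign k * Jsign k = 1"
  by (cases k) auto

lemma Jmat_mult_vec_nth: "(Jmat *v y) $ k = of_real (Jsign k) * y $ k"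
  by (cases k) (simp_all add: Jmat_def matrix_vector_mult_def sum_UNIV_sum if_distrib if_distribR
      cong: if_cong)

lemma Vmat_nth [simp]:
  "Vmat v t $ Inl i $ Inr j = v t $ i $ j"
  "Vmat v t $ Inr j $ Inl i = cnj (v t $ i $ j)"
  "Vmat v t $ Inl i $ Inl i' = 0"
  "Vmat v t $ Inr j $ Inr j' = 0"
  by (simp_all add: Vmat_def)

lemma Vmat_hermitian: "cnj (Vmat v t $ k $ l) = Vmat v t $ l $ k"
  by (cases k; cases l) simp_all

lemma Vmat_eq_0: "v t = 0 \<Longrightarrow> Vmat v t = 0"
  by (simp add: vec_eq_iff Vmat_def split: sum.splits)

lemma Vmat_mult_vec_Inr: "(Vmat v t *v y) $ Inr j = (\<Sum>i\<in>UNIV. cnj (v t $ i $ j) * y $ Inl i)"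
  by (simp add: matrix_vector_mult_def sum_UNIV_sum)

lemma cscale_nth: "cscale c A $ i $ j = c * A $ i $ j"
  by (simp add: cscale_def)

lemma cadj_nth: "cadj A $ i $ j = cnj (A $ j $ i)"
  by (simp add: cadj_def)

lemma cscale_mult_vec: "cscale c A *v x = c *s (A *v x)"
  by (simp add: vec_eq_iff cscale_def matrix_vector_mult_def sum_distrib_left mult.assoc)

lemma matrix_mult_nth_column: "(A ** B) $ i $ j = (A *v column j B) $ i"
  by (simp add: matrix_matrix_mult_def matrix_vector_mult_def column_def)

lemma column_matrix_mult: "column j (A ** B) = A *v column j B"
  by (simp add: vec_eq_iff column_def matrix_matrix_mult_def matrix_vector_mult_def)

lemma expJ_nth: "expJ w $ k $ l = (if k = l then exp (of_real (Jsign k) * w) else 0)"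
  by (cases k; cases l) (simp_all add: expJ_def)

lemma expJ_mult_nth: "(expJ w ** B) $ k $ l = exp (of_real (Jsign k) * w) * B $ k $ l"
  by (simp add: matrix_matrix_mult_def expJ_nth if_distrib if_distribR sum.delta cong: if_cong)

lemma expJ_mult_E2: "expJ w ** E2 = cscale (exp (- w)) E2"
proof -
  have "(expJ w ** E2) $ k $ i = cscale (exp (- w)) E2 $ k $ i" for k i
    by (cases k) (simp_all add: expJ_mult_nth E2_def cscale_def)
  then show ?thesis
    unfolding vec_eq_iff by blast
qed

lemma cadj_Vmat_expJ_E2_mult_nth:
  "(cadj (Vmat v x ** expJ (\<i> * of_real x * cnj z) ** E2) ** Y) $ i $ j
     = exp (\<i> * of_real x * z) * (Vmat v x *v column j Y) $ Inr i"
proof -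
  define w where "w = \<i> * of_real x * cnj z"
  define A where "A = Vmat v x ** expJ w ** E2"
  have "A $ k $ i = exp (- w) * Vmat v x $ k $ Inr i" for k
  proof -
    have "A = Vmat v x ** cscale (exp (- w)) E2"
      unfolding A_def by (simp only: matrix_mul_assoc[symmetric] expJ_mult_E2)
    then have "A $ k $ i = exp (- w) * (\<Sum>m\<in>UNIV. Vmat v x $ k $ m * E2 $ m $ i)"
      by (simp add: matrix_matrix_mult_def cscale_def sum_distrib_left mult.left_commute)
    also have "(\<Sum>m\<in>UNIV. Vmat v x $ k $ m * E2 $ m $ i) = Vmat v x $ k $ Inr i"
      by (simp add: E2_def sum_UNIV_sum if_distrib if_distribR sum.delta' cong: if_cong)
    finally show ?thesis .
  qed
  moreover have "cnj (exp (- w)) = exp (\<i> * of_real x * z)"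
    by (simp add: w_def exp_cnj)
  ultimately have "(cadj A ** Y) $ i $ j = (\<Sum>k\<in>UNIV. exp (\<i> * of_real x * z) * (Vmat v x $ Inr i $ k * Y $ k $ j))"
    by (simp add: cadj_def matrix_matrix_mult_def Vmat_hermitian mult_ac)
  then show ?thesis
    by (simp add: A_def w_def matrix_vector_mult_def column_def sum_distrib_left)
qed

lemma absolutely_integrable_mult_vec_nth:
  fixes M :: "real \<Rightarrow> complex^'n::finite^'m::finite"
  assumes M: "L2_mat {0..} M" and w: "\<And>l. continuous_on {0..b} (\<lambda>t. w t $ l)"
  shows "(\<lambda>t. (M t *v w t) $ k) absolutely_integrable_on {0..b}"
proof -
  have "(\<lambda>t. w t $ l * M t $ k $ l) absolutely_integrable_on {0..b}" for l
    using M by (intro absolutely_integrable_continuous_mult w L2_on_absolutely_integrable[where S = "{0..}"])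
      (auto simp: L2_mat_def)
  then have "(\<lambda>t. \<Sum>l\<in>UNIV. w t $ l * M t $ k $ l) absolutely_integrable_on {0..b}"
    by (intro absolutely_integrable_sum) auto
  then show ?thesis
    by (simp add: matrix_vector_mult_def mult.commute)
qed

section \<open>Solutions of the Dirac system\<close>

text \<open>Since \<open>J\<^sup>2 = I\<close>, the equation \<open>-i J y' - V y - z y = g\<close> of \<open>(L - z I) y = g\<close> is
  \<open>y' = i J (V y + z y + g)\<close>, which is required here in integral form on every \<open>[0, b]\<close>.\<close>

definition dirac_solution ::
  "(real \<Rightarrow> complex^'b::finite^'a::finite) \<Rightarrow> complex \<Rightarrow> (real \<Rightarrow> complex^('a + 'b))
     \<Rightarrow> (real \<Rightarrow> complex^('a + 'b)) \<Rightarrow> bool" where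
  "dirac_solution v z g y \<longleftrightarrow> (\<forall>k b. 0 \<le> b \<longrightarrow> ac_primitive 0 b (\<lambda>t. y t $ k)
      (\<lambda>t. \<i> * of_real (Jsign k) * ((Vmat v t *v y t) $ k + z * y t $ k + g t $ k)))"

lemma dirac_solutionD:
  "dirac_solution v z g y \<Longrightarrow> 0 \<le> b \<Longrightarrow> ac_primitive 0 b (\<lambda>t. y t $ k)
      (\<lambda>t. \<i> * of_real (Jsign k) * ((Vmat v t *v y t) $ k + z * y t $ k + g t $ k))"
  by (simp add: dirac_solution_def)

lemma dirac_solution_continuous:
  "dirac_solution v z g y \<Longrightarrow> 0 \<le> b \<Longrightarrow> continuous_on {0..b} (\<lambda>t. y t $ k)"
  by (rule ac_primitive_continuous[OF dirac_solutionD])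

lemma dirac_solution_add:
  assumes "dirac_solution v z g y" "dirac_solution v z h w"
  shows "dirac_solution v z (\<lambda>t. g t + h t) (\<lambda>t. y t + w t)"
  unfolding dirac_solution_def
proof (intro allI impI)
  fix k and b :: real assume "0 \<le> b"
  from ac_primitive_add[OF dirac_solutionD[OF assms(1) this, where k = k] dirac_solutionD[OF assms(2) this, where k = k]]
  show "ac_primitive 0 b (\<lambda>t. (y t + w t) $ k) (\<lambda>t. \<i> * of_real (Jsign k) *
      ((Vmat v t *v (y t + w t)) $ k + z * (y t + w t) $ k + (g t + h t) $ k))"
    by (simp add: matrix_vector_right_distrib algebra_simps)
qed

lemma dirac_solution_diff:
  assumes "dirac_solution v z g y" "dirac_solution v z h w"
  shows "dirac_solution v z (\<lambda>t. g t - h t) (\<lambda>t. y t - w t)"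
  unfolding dirac_solution_def
proof (intro allI impI)
  fix k and b :: real assume "0 \<le> b"
  from ac_primitive_diff[OF dirac_solutionD[OF assms(1) this, where k = k] dirac_solutionD[OF assms(2) this, where k = k]]
  show "ac_primitive 0 b (\<lambda>t. (y t - w t) $ k) (\<lambda>t. \<i> * of_real (Jsign k) *
      ((Vmat v t *v (y t - w t)) $ k + z * (y t - w t) $ k + (g t - h t) $ k))"
    by (simp add: matrix_vector_mult_diff_distrib algebra_simps)
qed

lemma dirac_solution_second_block_at_support_end:
  assumes y: "dirac_solution v z g y" and z: "0 < Im z" and "0 \<le> a"
    and v: "\<forall>t>a. v t = 0" and g: "\<forall>t>a. g t $ Inr j = 0" and L2: "L2_on {0..} (\<lambda>t. y t $ Inr j)"
  shows "y a $ Inr j = 0"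
proof (rule ac_primitive_exp_growth_L2_zero[OF z \<open>0 \<le> a\<close> _ L2])
  fix b assume "a \<le> b"
  with \<open>0 \<le> a\<close> have "0 \<le> b"
    by simp
  from ac_primitive_subinterval[OF dirac_solutionD[OF y this, where k = "Inr j"], of a b]
  have "ac_primitive a b (\<lambda>t. y t $ Inr j)
      (\<lambda>t. \<i> * of_real (Jsign (Inr j)) * ((Vmat v t *v y t) $ Inr j + z * y t $ Inr j + g t $ Inr j))"
    using \<open>0 \<le> a\<close> \<open>a \<le> b\<close> by simp
  then show "ac_primitive a b (\<lambda>t. y t $ Inr j) (\<lambda>t. - \<i> * z * y t $ Inr j)"
    by (rule ac_primitive_spike[where N = "{a}"]) (use v g in \<open>auto simp: Vmat_eq_0\<close>)
qed

lemma dirac_solution_at_0_eq_0: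
  assumes D: "dirac_solution v z (\<lambda>t. 0) D" and z: "0 \<le> Im z" and "0 \<le> a"
    and D0: "\<And>i. D 0 $ Inl i = 0" and Da: "\<And>j. D a $ Inr j = 0"
  shows "D 0 = 0"
proof -
  have "(\<Sum>k\<in>UNIV. Jsign k * (cmod (D a $ k))\<^sup>2) \<le> (\<Sum>k\<in>UNIV. Jsign k * (cmod (D 0 $ k))\<^sup>2)"
  proof (rule signature_form_antitone[OF z \<open>0 \<le> a\<close> Jsign_square Vmat_hermitian])
    show "ac_primitive 0 a (\<lambda>t. D t $ k)
        (\<lambda>t. \<i> * of_real (Jsign k) * ((Vmat v t *v D t) $ k + z * D t $ k))" for k
      using dirac_solutionD[OF D \<open>0 \<le> a\<close>, of k] by simp
  qed
  then have "(\<Sum>i\<in>UNIV. (cmod (D a $ Inl i))\<^sup>2) + (\<Sum>j\<in>UNIV. (cmod (D 0 $ Inr j))\<^sup>2) \<le> 0"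
    by (simp add: sum_UNIV_sum sum_negf D0 Da)
  moreover have "0 \<le> (\<Sum>i\<in>UNIV. (cmod (D a $ Inl i))\<^sup>2)"
    by (simp add: sum_nonneg)
  ultimately have "(\<Sum>j\<in>UNIV. (cmod (D 0 $ Inr j))\<^sup>2) = 0"
    by (intro antisym) (auto intro: sum_nonneg)
  then have "D 0 $ Inr j = 0" for j
    by (simp add: sum_nonneg_eq_0_iff)
  with D0 have "D 0 $ k = 0" for k
    by (cases k) auto
  then show ?thesis
    by (simp add: vec_eq_iff)
qed

lemma resolvent_imageD:
  assumes "resolvent_image v z g y"
  shows "dirac_solution v z g y" and "y 0 $ Inl i = 0" and "L2_on {0..} (\<lambda>t. y t $ k)"
proof -
  show "y 0 $ Inl i = 0" "L2_on {0..} (\<lambda>t. y t $ k)"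
    using assms by (simp_all add: resolvent_image_def L2_vec_def)
  obtain y' where y': "\<forall>x\<ge>0. y' absolutely_integrable_on {0..x} \<and> (y' has_integral (y x - y 0)) {0..x}"
    and ae: "AE x in lebesgue_on {0..}. - (\<i> *s (Jmat *v y' x)) - Vmat v x *v y x - z *s y x = g x"
    using assms unfolding resolvent_image_def by blast
  obtain N where N: "negligible N"
    and eq: "\<And>x. x \<in> {0..} \<Longrightarrow> x \<notin> N \<Longrightarrow> - (\<i> *s (Jmat *v y' x)) - Vmat v x *v y x - z *s y x = g x"
    using AE_lebesgue_on_imp_negligible[OF ae] by auto
  show "dirac_solution v z g y"
    unfolding dirac_solution_def
  proof (intro allI impI)
    fix k and b :: real assume "0 \<le> b"
    with y' have "ac_primitive 0 b (\<lambda>t. y t $ k) (\<lambda>t. y' t $ k)"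
      by (intro ac_primitive_vec_nth) auto
    then show "ac_primitive 0 b (\<lambda>t. y t $ k)
        (\<lambda>t. \<i> * of_real (Jsign k) * ((Vmat v t *v y t) $ k + z * y t $ k + g t $ k))"
    proof (rule ac_primitive_spike[OF _ N])
      fix t assume "t \<in> {0..b} - N"
      then have "- (\<i> * (of_real (Jsign k) * y' t $ k)) - (Vmat v t *v y t) $ k - z * y t $ k = g t $ k"
        using eq[of t] by (auto simp: vec_eq_iff Jmat_mult_vec_nth)
      then have E: "- (\<i> * (of_real (Jsign k) * y' t $ k)) = (Vmat v t *v y t) $ k + z * y t $ k + g t $ k"
        by (simp add: algebra_simps)
      have "y' t $ k = \<i> * of_real (Jsign k) * (- (\<i> * (of_real (Jsign k) * y' t $ k)))"
        by (cases k) simp_all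
      then show "\<i> * of_real (Jsign k) * ((Vmat v t *v y t) $ k + z * y t $ k + g t $ k) = y' t $ k"
        unfolding E by simp
    qed
  qed
qed

lemma fundamental_solution_at_0:
  assumes "fundamental_solution v u"
  shows "u 0 z = mat 1"
proof -
  have "\<forall>x\<ge>0. ((\<lambda>t. cscale \<i> ((cscale z Jmat + Jmat ** Vmat v t) ** u t z)) has_integral (u x z - mat 1)) {0..x}"
    using assms unfolding fundamental_solution_def by blast
  from this[rule_format, of 0]
  have "((\<lambda>t. cscale \<i> ((cscale z Jmat + Jmat ** Vmat v t) ** u t z)) has_integral (u 0 z - mat 1)) {0}"
    by simp
  from has_integral_unique[OF this has_integral_refl(2)] show ?thesis
    by simp
qed

lemma dirac_solution_fundamental:
  assumes u: "fundamental_solution v u" and V: "L2_mat {0..} (Vmat v)"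
  shows "dirac_solution v z (\<lambda>t. 0) (\<lambda>t. u t z *v c)"
  unfolding dirac_solution_def
proof (intro allI impI)
  fix k and b :: real assume "0 \<le> b"
  define w where "w t = u t z *v c" for t
  define I where "I t = cscale \<i> ((cscale z Jmat + Jmat ** Vmat v t) ** u t z)" for t
  have rhs: "(I t *v c) $ l = \<i> * of_real (Jsign l) * ((Vmat v t *v w t) $ l + z * w t $ l)" for t l
    by (simp add: I_def w_def cscale_mult_vec matrix_vector_mul_assoc[symmetric]
        matrix_vector_mult_add_rdistrib Jmat_mult_vec_nth algebra_simps)
  have prim: "((\<lambda>t. (I t *v c) $ l) has_integral w x $ l - w 0 $ l) {0..x}" if "0 \<le> x" for x l
  proof -
    have "(I has_integral u x z - mat 1) {0..x}"
      using u \<open>0 \<le> x\<close> unfolding fundamental_solution_def I_def by blast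
    from has_integral_mult_vec_nth[OF this]
    show ?thesis
      by (simp add: w_def fundamental_solution_at_0[OF u] matrix_vector_mult_diff_rdistrib)
  qed
  have w: "continuous_on {0..b} (\<lambda>t. w t $ l)" for l
    using prim by (intro primitive_continuous_on) auto
  have "(\<lambda>t. z * w t $ k) absolutely_integrable_on {0..b}"
    by (intro absolutely_integrable_continuous_real continuous_on_mult continuous_on_const w)
  from set_integrable_mult_right[OF set_integral_add(1)[OF absolutely_integrable_mult_vec_nth[OF V w] this]]
  have "(\<lambda>t. \<i> * of_real (Jsign k) * ((Vmat v t *v w t) $ k + z * w t $ k)) absolutely_integrable_on {0..b}" .
  moreover have "((\<lambda>t. \<i> * of_real (Jsign k) * ((Vmat v t *v w t) $ k + z * w t $ k)) has_integral w x $ k - w 0 $ k) {0..x}"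
    if "x \<in> {0..b}" for x
    using prim[of x k] that by (simp add: rhs)
  ultimately show "ac_primitive 0 b (\<lambda>t. (u t z *v c) $ k)
      (\<lambda>t. \<i> * of_real (Jsign k) * ((Vmat v t *v (u t z *v c)) $ k + z * (u t z *v c) $ k + 0 $ k))"
    by (simp add: ac_primitive_def w_def)
qed

definition free_solution :: "complex \<Rightarrow> 'a \<Rightarrow> real \<Rightarrow> complex^('a::finite + 'b::finite)" where
  "free_solution z j t = (\<chi> k. case k of Inl i \<Rightarrow> if i = j then exp (\<i> * z * of_real t) else 0 | Inr _ \<Rightarrow> 0)"

lemma free_solution_nth [simp]:
  "free_solution z j t $ Inl i = (if i = j then exp (\<i> * z * of_real t) else 0)"
  "free_solution z j t $ Inr l = 0"
  by (simp_all add: free_solution_def)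

lemma column_expJ_E1: "column j (expJ (\<i> * of_real t * z) ** E1) = free_solution z j t"
proof -
  have "column j (expJ (\<i> * of_real t * z) ** E1) $ k = free_solution z j t $ k" for k
    by (cases k) (simp_all add: column_def expJ_mult_nth E1_def mult.commute mult.left_commute)
  then show ?thesis
    unfolding vec_eq_iff by blast
qed

lemma Vmat_mult_free_solution_Inr:
  "(Vmat v t *v free_solution z j t) $ Inr i = cnj (v t $ j $ i) * exp (\<i> * z * of_real t)"
  by (simp add: Vmat_mult_vec_Inr if_distrib if_distribR sum.delta' cong: if_cong)

lemma dirac_solution_free_solution:
  fixes v :: "real \<Rightarrow> complex^'b::finite^'a::finite"
  shows "dirac_solution v z (\<lambda>t. - (Vmat v t *v free_solution z j t)) (free_solution z j)"
  unfolding dirac_solution_def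
proof (intro allI impI)
  fix k :: "'a + 'b" and b :: real assume "0 \<le> b"
  have "ac_primitive 0 b (\<lambda>t. free_solution z j t $ k) (\<lambda>t. \<i> * of_real (Jsign k) * z * free_solution z j t $ k)"
  proof (cases k)
    case (Inl i)
    then show ?thesis
      using ac_primitive_exp[OF \<open>0 \<le> b\<close>, of "\<i> * z"] by (cases "i = j") (simp_all add: ac_primitive_const)
  qed (simp add: ac_primitive_const)
  moreover have "(Vmat v t *v free_solution z j t) $ k + z * free_solution z j t $ k
      + (- (Vmat v t *v free_solution z j t)) $ k = z * (free_solution z j t :: complex^('a + 'b)) $ k" for t
    by simp
  ultimately show "ac_primitive 0 b (\<lambda>t. free_solution z j t $ k) (\<lambda>t. \<i> * of_real (Jsign k) *
      ((Vmat v t *v free_solution z j t) $ k + z * free_solution z j t $ k + (- (Vmat v t *v free_solution z j t)) $ k))"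
    by (simp only: mult.assoc)
qed

lemma dirac_solution_second_block_at_0:
  fixes v :: "real \<Rightarrow> complex^'b::finite^'a::finite"
  assumes y: "dirac_solution v z g y" and z: "0 < Im z" and "0 \<le> a"
    and v: "\<forall>t>a. v t = 0" and g: "\<forall>t>a. g t $ Inr j = 0" and L2: "L2_on {0..} (\<lambda>t. y t $ Inr j)"
  shows "y 0 $ Inr j
    = \<i> * integral {0..a} (\<lambda>t. exp (\<i> * z * of_real t) * ((Vmat v t *v y t) $ Inr j + g t $ Inr j))"
proof -
  define E where "E t = exp (\<i> * z * of_real t)" for t
  define f where "f = (\<lambda>t. E t * ((Vmat v t *v y t) $ Inr j + g t $ Inr j))"
  have "ac_primitive 0 a (\<lambda>t. E t * y t $ Inr j) (\<lambda>t. \<i> * z * E t * y t $ Inr j + E t *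
      (\<i> * of_real (Jsign (Inr j :: 'a + 'b)) * ((Vmat v t *v y t) $ Inr j + z * y t $ Inr j + g t $ Inr j)))"
    unfolding E_def by (rule ac_primitive_mult[OF ac_primitive_exp[OF \<open>0 \<le> a\<close>] dirac_solutionD[OF y \<open>0 \<le> a\<close>]])
  moreover have "\<i> * z * E t * y t $ Inr j + E t *
      (\<i> * of_real (Jsign (Inr j :: 'a + 'b)) * ((Vmat v t *v y t) $ Inr j + z * y t $ Inr j + g t $ Inr j))
      = - \<i> * f t" for t
    by (simp add: f_def algebra_simps)
  ultimately have "((\<lambda>t. - \<i> * f t) has_integral E a * y a $ Inr j - E 0 * y 0 $ Inr j) {0..a}"
    using ac_primitive_has_integral[OF _ \<open>0 \<le> a\<close>] by (simp only:)
  moreover have "y a $ Inr j = 0"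
    by (rule dirac_solution_second_block_at_support_end[OF y z \<open>0 \<le> a\<close> v g L2])
  ultimately have "((\<lambda>t. \<i> * (- \<i> * f t)) has_integral \<i> * (- y 0 $ Inr j)) {0..a}"
    by (intro has_integral_mult_right) (simp add: E_def)
  then have "(f has_integral - \<i> * y 0 $ Inr j) {0..a}"
    by simp
  then have "integral {0..a} f = - \<i> * y 0 $ Inr j"
    by (rule integral_unique)
  then show ?thesis
    by (simp add: f_def E_def)
qed

lemma weyl_function_nth_eq_at_0:
  fixes v :: "real \<Rightarrow> complex^'b::finite^'a::finite"
  assumes V: "L2_mat {0..} (Vmat v)" and "0 \<le> a" and v: "\<forall>t>a. v t = 0"
    and u: "fundamental_solution v u" and \<phi>: "weyl_function u \<phi>" and z: "0 < Im z"
    and y: "dirac_solution v z (\<lambda>t. Vmat v t *v free_solution z j t) y"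
    and y0: "\<And>i. y 0 $ Inl i = 0" and L2y: "\<And>i. L2_on {0..} (\<lambda>t. y t $ Inr i)"
  shows "\<phi> z $ i $ j = y 0 $ Inr i"
proof -
  define w where "w t = u t z *v column j (Icol (\<phi> z))" for t
  define D where "D = (\<lambda>t. y t + free_solution z j t - w t)"
  have "dirac_solution v z (\<lambda>t. Vmat v t *v free_solution z j t + - (Vmat v t *v free_solution z j t) - 0)
      (\<lambda>t. y t + free_solution z j t - w t)"
    unfolding w_def
    by (intro dirac_solution_diff dirac_solution_add y dirac_solution_free_solution
        dirac_solution_fundamental u V)
  then have D: "dirac_solution v z (\<lambda>t. 0) D"
    by (simp add: D_def)
  have w0: "w 0 = column j (Icol (\<phi> z))"
    by (simp add: w_def fundamental_solution_at_0[OF u])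
  have L2w: "L2_on {0..} (\<lambda>t. w t $ Inr i')" for i'
    using \<phi> z by (simp add: weyl_function_def L2_mat_def w_def matrix_mult_nth_column)
  have "D 0 = 0"
  proof (rule dirac_solution_at_0_eq_0[OF D _ \<open>0 \<le> a\<close>])
    show "D 0 $ Inl i' = 0" for i'
      by (simp add: D_def w0 y0 column_def Icol_def)
    show "D a $ Inr i' = 0" for i'
      using L2_on_diff[OF L2y L2w]
      by (intro dirac_solution_second_block_at_support_end[OF D z \<open>0 \<le> a\<close> v]) (simp_all add: D_def)
  qed (use z in simp)
  then have "D 0 $ Inr i = 0"
    by simp
  then show ?thesis
    by (simp add: D_def w0 column_def Icol_def)
qed

lemma absolutely_integrable_exp_Vmat_mult_vec_nth:
  assumes V: "L2_mat {0..} (Vmat v)" and "0 \<le> a" and v: "\<forall>t>a. v t = 0"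
    and w: "\<And>l. continuous_on {0..a} (\<lambda>t. w t $ l)"
  shows "(\<lambda>t. exp (\<i> * of_real t * z) * (Vmat v t *v w t) $ k) absolutely_integrable_on {0..}"
    and "(LINT t:{0..}|lebesgue. exp (\<i> * of_real t * z) * (Vmat v t *v w t) $ k)
       = (LINT t:{0..a}|lebesgue. exp (\<i> * of_real t * z) * (Vmat v t *v w t) $ k)"
proof -
  let ?f = "\<lambda>t. exp (\<i> * of_real t * z) * (Vmat v t *v w t) $ k"
  have support: "?f t = 0" if "t \<in> {0..} - {0..a}" for t
  proof -
    have "v t = 0"
      using that v by auto
    then show ?thesis
      by (simp add: Vmat_eq_0)
  qed
  have "set_integrable lebesgue {0..} ?f \<longleftrightarrow> set_integrable lebesgue {0..a} ?f"
    "(LINT t:{0..}|lebesgue. ?f t) = (LINT t:{0..a}|lebesgue. ?f t)"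
    by (rule set_integral_zero_outside; use support in auto)+
  moreover have "?f absolutely_integrable_on {0..a}"
    by (intro absolutely_integrable_continuous_mult continuous_intros absolutely_integrable_mult_vec_nth[OF V w])
  ultimately show "?f absolutely_integrable_on {0..}" "(LINT t:{0..}|lebesgue. ?f t) = (LINT t:{0..a}|lebesgue. ?f t)"
    by simp_all
qed

lemma resolvent_image_second_block_at_0:
  fixes v :: "real \<Rightarrow> complex^'b::finite^'a::finite"
  assumes "0 \<le> a" and v: "\<forall>t>a. v t = 0" and z: "0 < Im z"
    and res: "resolvent_image v z (\<lambda>t. Vmat v t *v free_solution z j t) y"
  shows "y 0 $ Inr i = \<i> * integral {0..a} (\<lambda>t. exp (2 * \<i> * of_real t * z) * cnj (v t $ j $ i)
      + exp (\<i> * of_real t * z) * (Vmat v t *v y t) $ Inr i)"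
proof -
  have "y 0 $ Inr i = \<i> * integral {0..a} (\<lambda>t. exp (\<i> * z * of_real t) *
      ((Vmat v t *v y t) $ Inr i + (Vmat v t *v free_solution z j t) $ Inr i))"
    by (rule dirac_solution_second_block_at_0[OF resolvent_imageD(1)[OF res] z \<open>0 \<le> a\<close> v _
          resolvent_imageD(3)[OF res]]) (simp add: v Vmat_eq_0)
  also have "(\<lambda>t. exp (\<i> * z * of_real t) *
      ((Vmat v t *v y t) $ Inr i + (Vmat v t *v free_solution z j t) $ Inr i))
    = (\<lambda>t. exp (2 * \<i> * of_real t * z) * cnj (v t $ j $ i) + exp (\<i> * of_real t * z) * (Vmat v t *v y t) $ Inr i)"
    by (simp add: Vmat_mult_free_solution_Inr algebra_simps flip: exp_add)
  finally show ?thesis .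
qed

lemma weyl_function_nth:
  fixes v :: "real \<Rightarrow> complex^'b::finite^'a::finite"
  assumes V: "L2_mat {0..} (Vmat v)" and "0 \<le> a" and v: "\<forall>t>a. v t = 0"
    and u: "fundamental_solution v u" and \<phi>: "weyl_function u \<phi>" and z: "0 < Im z"
    and res: "resolvent_image v z (\<lambda>t. Vmat v t *v free_solution z j t) y"
  shows "(\<lambda>t. exp (2 * \<i> * of_real t * z) * cnj (v t $ j $ i)) absolutely_integrable_on {0..a}"
    and "(\<lambda>t. exp (\<i> * of_real t * z) * (Vmat v t *v y t) $ Inr i) absolutely_integrable_on {0..}"
    and "\<phi> z $ i $ j = \<i> * (LINT t:{0..a}|lebesgue. exp (2 * \<i> * of_real t * z) * cnj (v t $ j $ i))
          + \<i> * (LINT t:{0..}|lebesgue. exp (\<i> * of_real t * z) * (Vmat v t *v y t) $ Inr i)"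
proof -
  let ?f1 = "\<lambda>t. exp (2 * \<i> * of_real t * z) * cnj (v t $ j $ i)"
  let ?f2 = "\<lambda>t. exp (\<i> * of_real t * z) * (Vmat v t *v y t) $ Inr i"
  have "L2_on {0..} (\<lambda>t. Vmat v t $ Inr i $ Inl j)"
    using V unfolding L2_mat_def by blast
  then show f1: "?f1 absolutely_integrable_on {0..a}"
    by (intro absolutely_integrable_continuous_mult continuous_intros L2_on_absolutely_integrable) auto
  note f2 = absolutely_integrable_exp_Vmat_mult_vec_nth[OF V \<open>0 \<le> a\<close> v
      dirac_solution_continuous[OF resolvent_imageD(1)[OF res] \<open>0 \<le> a\<close>]]
  then show "?f2 absolutely_integrable_on {0..}"
    by blast
  have f2': "?f2 absolutely_integrable_on {0..a}"
    by (rule set_integrable_subset[OF f2(1)]) auto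
  have "\<phi> z $ i $ j = y 0 $ Inr i"
    by (rule weyl_function_nth_eq_at_0[OF V \<open>0 \<le> a\<close> v u \<phi> z resolvent_imageD[OF res]])
  also have "\<dots> = \<i> * integral {0..a} (\<lambda>t. ?f1 t + ?f2 t)"
    by (rule resolvent_image_second_block_at_0[OF \<open>0 \<le> a\<close> v z res])
  also have "integral {0..a} (\<lambda>t. ?f1 t + ?f2 t) = integral {0..a} ?f1 + integral {0..a} ?f2"
    using f1 f2' by (intro integral_add set_lebesgue_integral_eq_integral(1))
  also have "integral {0..a} ?f1 = (LINT t:{0..a}|lebesgue. ?f1 t)"
    by (rule set_lebesgue_integral_eq_integral(2)[OF f1, symmetric])
  also have "integral {0..a} ?f2 = (LINT t:{0..}|lebesgue. ?f2 t)"
    using set_lebesgue_integral_eq_integral(2)[OF f2'] f2(2) by simp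
  finally show "\<phi> z $ i $ j = \<i> * (LINT t:{0..a}|lebesgue. ?f1 t) + \<i> * (LINT t:{0..}|lebesgue. ?f2 t)"
    by (simp add: distrib_left)
qed

lemma column_Vmat_expJ_E1:
  "column j (Vmat v x ** expJ (\<i> * of_real x * z) ** E1) = Vmat v x *v free_solution z j x"
  by (simp only: matrix_mul_assoc[symmetric] column_matrix_mult[where A = "Vmat v x"] column_expJ_E1)

theorem propositionA2:
  fixes v :: "real \<Rightarrow> complex^'m2::finite^'m1::finite"
    and a :: real
    and u :: "real \<Rightarrow> complex \<Rightarrow> complex^('m1+'m2)^('m1+'m2)"
    and \<phi> :: "complex \<Rightarrow> complex^'m1^'m2"
    and z :: complex
    and Y :: "real \<Rightarrow> complex^'m1^('m1+'m2)"
  assumes "a > 0"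
    and "L2_mat {0..} (Vmat v)"
    and "\<forall>x>a. v x = 0"
    and "fundamental_solution v u"
    and "weyl_function u \<phi>"
    and "0 < Im z"
    and "\<forall>j. resolvent_image v z
               (\<lambda>x. column j (Vmat v x ** expJ (\<i> * of_real x * z) ** E1))
               (\<lambda>x. column j (Y x))"
  shows "\<phi> z =
     cscale \<i> (set_lebesgue_integral lebesgue {0..a}
                 (\<lambda>x. cscale (exp (2 * \<i> * of_real x * z)) (cadj (v x))))
   + cscale \<i> (set_lebesgue_integral lebesgue {0..}
                 (\<lambda>x. cadj (Vmat v x ** expJ (\<i> * of_real x * cnj z) ** E2) ** Y x))"
proof -
  have res: "resolvent_image v z (\<lambda>x. Vmat v x *v free_solution z j x) (\<lambda>x. column j (Y x))" for j
    using assms(7) by (simp add: column_Vmat_expJ_E1)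
  note entry = weyl_function_nth[OF assms(2) less_imp_le[OF \<open>0 < a\<close>] assms(3-6) res]
  have F1: "cscale (exp (2 * \<i> * of_real x * z)) (cadj (v x)) $ i $ j
      = exp (2 * \<i> * of_real x * z) * cnj (v x $ j $ i)" for x i j
    by (simp add: cscale_nth cadj_nth)
  have F2: "(cadj (Vmat v x ** expJ (\<i> * of_real x * cnj z) ** E2) ** Y x) $ i $ j
      = exp (\<i> * of_real x * z) * (Vmat v x *v column j (Y x)) $ Inr i" for x i j
    by (rule cadj_Vmat_expJ_E2_mult_nth)
  have "\<phi> z $ i $ j = \<i> * (LINT x:{0..a}|lebesgue. cscale (exp (2 * \<i> * of_real x * z)) (cadj (v x)) $ i $ j)
      + \<i> * (LINT x:{0..}|lebesgue. (cadj (Vmat v x ** expJ (\<i> * of_real x * cnj z) ** E2) ** Y x) $ i $ j)"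
    for i j
    unfolding F1 F2 by (rule entry(3))
  moreover have "set_integrable lebesgue {0..a}
      (\<lambda>x. cscale (exp (2 * \<i> * of_real x * z)) (cadj (v x)) $ i $ j)" for i j
    unfolding F1 by (rule entry(1))
  moreover have "set_integrable lebesgue {0..}
      (\<lambda>x. (cadj (Vmat v x ** expJ (\<i> * of_real x * cnj z) ** E2) ** Y x) $ i $ j)" for i j
    unfolding F2 by (rule entry(2))
  ultimately show ?thesis
    by (simp add: vec_eq_iff cscale_nth set_lebesgue_integral_matrix_nth)
qed

end
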